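(* Let $X$ be an $n\times p$ real matrix, $Z\in\mathbb{R}^n$ a nonzero vector, and $1\le k\le\min(n,p)$. Let $V_kD_kU_k^T$ be the rank-$k$ truncated singular value decomposition of $X$, so that $\widetilde X_k = V_kD_kU_k^T$ is the best rank-$k$ approximation of $X$ in Frobenius norm, and let $P_Z = Z(Z^TZ)^{-1}Z^T$. Let $\widetilde X_{OG} = (I_n-P_Z)V_kD_kU_k^T$ be the reconstruction produced by the orthogonality-to-group (OG) procedure. Then the reconstruction error of the OG procedure is lower bounded by that of $\widetilde X_k$, and the additional error equals $\|P_ZV_kD_k\|_F^2$: $$\|X-\widetilde X_{OG}\|_F^2 = \|X - V_kD_kU_k^T\|_F^2 + \|P_ZV_kD_k\|_F^2 .$$
   Context: $V_k$ ($n\times k$), $D_k$ ($k\times k$ diagonal), $U_k$ ($p\times k$) contain respectively the first $k$ left singular vectors, the $k$ largest singular values, and the first $k$ right singular vectors of $X$. $\|\cdot\|_F$ is the Frobenius norm. *)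

theory Defs
  imports Complex_Main "Jordan_Normal_Form.Matrix"
begin

definition frob_norm :: "real mat \<Rightarrow> real" where
  "frob_norm A = sqrt (\<Sum>i<dim_row A. \<Sum>j<dim_col A. (A $$ (i,j))\<^sup>2)"

definition diag_mat_of :: "nat \<Rightarrow> (nat \<Rightarrow> real) \<Rightarrow> real mat" where
  "diag_mat_of k s = mat k k (\<lambda>(i,j). if i = j then s i else 0)"

definition first_cols :: "nat \<Rightarrow> real mat \<Rightarrow> real mat" where
  "first_cols k A = mat (dim_row A) k (\<lambda>(i,j). A $$ (i,j))"

definition is_svd :: "real mat \<Rightarrow> real mat \<Rightarrow> (nat \<Rightarrow> real) \<Rightarrow> real mat \<Rightarrow> bool" where
  "is_svd X V s U \<longleftrightarrow>
     (let n = dim_row X; p = dim_col X; m = min n p in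
        V \<in> carrier_mat n m \<and> U \<in> carrier_mat p m \<and>
        transpose_mat V * V = 1\<^sub>m m \<and> transpose_mat U * U = 1\<^sub>m m \<and>
        (\<forall>i<m. 0 \<le> s i) \<and> (\<forall>i j. i \<le> j \<and> j < m \<longrightarrow> s j \<le> s i) \<and>
        X = V * diag_mat_of m s * transpose_mat U)"

definition truncated_svd :: "real mat \<Rightarrow> nat \<Rightarrow> real mat \<Rightarrow> real mat \<Rightarrow> real mat \<Rightarrow> bool" where
  "truncated_svd X k Vk Dk Uk \<longleftrightarrow>
     (\<exists>V s U. is_svd X V s U \<and> Vk = first_cols k V \<and> Dk = diag_mat_of k s \<and> Uk = first_cols k U)"

definition proj_mat :: "real vec \<Rightarrow> real mat" where
  "proj_mat Z = (let Zc = mat_of_cols (dim_vec Z) [Z] in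
     Zc * (inverse (Z \<bullet> Z) \<cdot>\<^sub>m transpose_mat Zc))"

end

theory Submission
  imports Defs
begin

(* Write E = X - V_k D_k U_k^T. Since X U_k = V_k D_k and U_k^T U_k = I, we get E U_k = 0,
   so E is Frobenius-orthogonal to every matrix M U_k^T, and M |-> M U_k^T preserves the
   Frobenius norm. The OG error is E + (P_Z V_k D_k) U_k^T, and Pythagoras gives the identity. *)

definition frob_inner :: "real mat \<Rightarrow> real mat \<Rightarrow> real" where
  "frob_inner A B = (\<Sum>i<dim_row A. \<Sum>j<dim_col A. A $$ (i,j) * B $$ (i,j))"

lemma frob_norm_eq_sqrt_frob_inner: "frob_norm A = sqrt (frob_inner A A)"
  unfolding frob_norm_def frob_inner_def by (simp add: power2_eq_square)

lemma frob_norm_sq: "(frob_norm A)\<^sup>2 = frob_inner A A"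
  unfolding frob_norm_eq_sqrt_frob_inner frob_inner_def
  by (simp add: sum_nonneg)

lemma frob_norm_sq_add:
  assumes "A \<in> carrier_mat n p" "B \<in> carrier_mat n p"
  shows "(frob_norm (A + B))\<^sup>2 = (frob_norm A)\<^sup>2 + (frob_norm B)\<^sup>2 + 2 * frob_inner A B"
  using assms unfolding frob_norm_sq frob_inner_def
  by (simp add: algebra_simps sum.distrib sum_distrib_left)

lemma frob_inner_mult_transpose_right:
  assumes A: "A \<in> carrier_mat n p" and M: "M \<in> carrier_mat n k" and U: "U \<in> carrier_mat p k"
  shows "frob_inner A (M * transpose_mat U) = frob_inner (A * U) M"
proof -
  have "frob_inner A (M * transpose_mat U)
      = (\<Sum>i<n. \<Sum>j<p. \<Sum>l<k. A $$ (i,j) * (M $$ (i,l) * U $$ (j,l)))"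
    using A M U unfolding frob_inner_def
    by (simp add: scalar_prod_def lessThan_atLeast0 sum_distrib_left)
  also have "\<dots> = (\<Sum>i<n. \<Sum>l<k. \<Sum>j<p. A $$ (i,j) * (M $$ (i,l) * U $$ (j,l)))"
    by (simp add: sum.swap[of _ "{..<p}"])
  also have "\<dots> = frob_inner (A * U) M"
    using A M U unfolding frob_inner_def
    by (simp add: scalar_prod_def lessThan_atLeast0 sum_distrib_left mult_ac)
  finally show ?thesis .
qed

lemma frob_norm_mult_transpose_orthonormal:
  assumes M: "M \<in> carrier_mat n k" and U: "U \<in> carrier_mat p k"
    and orth: "transpose_mat U * U = 1\<^sub>m k"
  shows "frob_norm (M * transpose_mat U) = frob_norm M"
proof -
  have "frob_inner (M * transpose_mat U) (M * transpose_mat U)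
      = frob_inner (M * transpose_mat U * U) M"
    using M U by (intro frob_inner_mult_transpose_right) auto
  also have "M * transpose_mat U * U = M"
    using M U orth by simp
  finally show ?thesis
    unfolding frob_norm_eq_sqrt_frob_inner by simp
qed

lemma frob_norm_sq_add_orthogonal:
  assumes A: "A \<in> carrier_mat n p" and M: "M \<in> carrier_mat n k" and U: "U \<in> carrier_mat p k"
    and orth: "transpose_mat U * U = 1\<^sub>m k" and AU: "A * U = 0\<^sub>m n k"
  shows "(frob_norm (A + M * transpose_mat U))\<^sup>2 = (frob_norm A)\<^sup>2 + (frob_norm M)\<^sup>2"
proof -
  have "frob_inner A (M * transpose_mat U) = 0"
    using frob_inner_mult_transpose_right[OF A M U] AU by (simp add: frob_inner_def)
  then show ?thesis
    using frob_norm_sq_add[of A n p "M * transpose_mat U"] A M U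
      frob_norm_mult_transpose_orthonormal[OF M U orth] by simp
qed

lemma first_cols_carrier_mat: "first_cols k A \<in> carrier_mat (dim_row A) k"
  unfolding first_cols_def by simp

lemma first_cols_eq_mult_first_cols_one:
  assumes A: "A \<in> carrier_mat n m" and km: "k \<le> m"
  shows "first_cols k A = A * first_cols k (1\<^sub>m m)"
  using A km unfolding first_cols_def
  by (intro eq_matI)
    (auto simp: scalar_prod_def if_distrib[of "\<lambda>x. _ * x"] sum.delta' cong: if_cong)

lemma transpose_first_cols_one_mult:
  assumes "k \<le> m"
  shows "transpose_mat (first_cols k (1\<^sub>m m)) * first_cols k (1\<^sub>m m) = (1\<^sub>m k :: real mat)"
  using assms unfolding first_cols_def
  by (intro eq_matI)
    (auto simp: scalar_prod_def if_distrib[of "\<lambda>x. _ * x"] sum.delta' cong: if_cong)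

lemma diag_mat_of_mult_first_cols_one:
  assumes "k \<le> m"
  shows "diag_mat_of m s * first_cols k (1\<^sub>m m) = first_cols k (1\<^sub>m m) * diag_mat_of k s"
  using assms unfolding first_cols_def diag_mat_of_def
  by (intro eq_matI)
    (auto simp: scalar_prod_def if_distrib[of "\<lambda>x. _ * x"] sum.delta' cong: if_cong)

lemma first_cols_orthonormal:
  assumes U: "U \<in> carrier_mat p m" and orth: "transpose_mat U * U = 1\<^sub>m m" and km: "k \<le> m"
  shows "transpose_mat (first_cols k U) * first_cols k U = 1\<^sub>m k"
proof -
  define J :: "real mat" where "J = first_cols k (1\<^sub>m m)"
  have J: "J \<in> carrier_mat m k" unfolding J_def first_cols_def by simp
  have "transpose_mat (first_cols k U) * first_cols k U
      = transpose_mat J * transpose_mat U * (U * J)"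
    unfolding first_cols_eq_mult_first_cols_one[OF U km] J_def[symmetric]
    using transpose_mult[OF U J] by simp
  also have "\<dots> = transpose_mat J * (transpose_mat U * U) * J"
    using U J
    by (simp add: assoc_mult_mat[of "transpose_mat J" k m "transpose_mat U" p "U * J" k]
        assoc_mult_mat[of "transpose_mat J" k m "transpose_mat U * U" m J k]
        assoc_mult_mat[of "transpose_mat U" m p U m J k])
  also have "\<dots> = 1\<^sub>m k"
    using orth J transpose_first_cols_one_mult[OF km] by (simp add: J_def)
  finally show ?thesis .
qed

lemma svd_mult_first_cols:
  assumes svd: "is_svd X V s U" and km: "k \<le> min (dim_row X) (dim_col X)"
  shows "X * first_cols k U = first_cols k V * diag_mat_of k s"
proof -
  define n p m where "n = dim_row X" and "p = dim_col X" and "m = min (dim_row X) (dim_col X)"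
  define J :: "real mat" where "J = first_cols k (1\<^sub>m m)"
  define D where "D = diag_mat_of m s"
  have V: "V \<in> carrier_mat n m" and U: "U \<in> carrier_mat p m"
    and orth: "transpose_mat U * U = 1\<^sub>m m" and X: "X = V * D * transpose_mat U"
    using svd unfolding is_svd_def n_def p_def m_def D_def Let_def by auto
  have J: "J \<in> carrier_mat m k" unfolding J_def first_cols_def by simp
  have D: "D \<in> carrier_mat m m" unfolding D_def diag_mat_of_def by simp
  have k_le_m: "k \<le> m" using km m_def by simp
  have Dk: "diag_mat_of k s \<in> carrier_mat k k" unfolding diag_mat_of_def by simp
  have "X * first_cols k U = V * D * transpose_mat U * (U * J)"
    using first_cols_eq_mult_first_cols_one[OF U k_le_m] by (simp add: X J_def)
  also have "\<dots> = V * (D * ((transpose_mat U * U) * J))"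
    using V D U J
    by (simp del: assoc_mult_mat add: assoc_mult_mat[of "V * D" n m "transpose_mat U" p "U * J" k]
        assoc_mult_mat[of V n m D m "transpose_mat U * (U * J)" k]
        assoc_mult_mat[of "transpose_mat U" m p U m J k])
  also have "\<dots> = V * (J * diag_mat_of k s)"
    using orth J diag_mat_of_mult_first_cols_one km by (simp add: D_def J_def m_def)
  also have "\<dots> = first_cols k V * diag_mat_of k s"
    using V J Dk km first_cols_eq_mult_first_cols_one[OF V]
    by (simp add: J_def m_def)
  finally show ?thesis .
qed

lemma truncated_svdD:
  assumes tsvd: "truncated_svd X k Vk Dk Uk"
    and X: "X \<in> carrier_mat n p" and km: "k \<le> min n p"
  shows "Vk \<in> carrier_mat n k" and "Dk \<in> carrier_mat k k"
    and "Uk \<in> carrier_mat p k" and "transpose_mat Uk * Uk = 1\<^sub>m k"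
    and "X * Uk = Vk * Dk"
proof -
  obtain V s U where svd: "is_svd X V s U" and Vk: "Vk = first_cols k V"
    and Dk: "Dk = diag_mat_of k s" and Uk: "Uk = first_cols k U"
    using tsvd unfolding truncated_svd_def by blast
  have V: "V \<in> carrier_mat n (min n p)" and U: "U \<in> carrier_mat p (min n p)"
    and orth: "transpose_mat U * U = 1\<^sub>m (min n p)"
    using svd X unfolding is_svd_def Let_def by auto
  show "Vk \<in> carrier_mat n k" "Uk \<in> carrier_mat p k"
    using V U first_cols_carrier_mat unfolding Vk Uk by auto
  show "Dk \<in> carrier_mat k k" unfolding Dk diag_mat_of_def by simp
  show "transpose_mat Uk * Uk = 1\<^sub>m k"
    unfolding Uk using first_cols_orthonormal[OF U orth km] .
  show "X * Uk = Vk * Dk"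
    unfolding Vk Dk Uk using svd_mult_first_cols[OF svd] km X by simp
qed

lemma orthonormal_residual_mult_eq_zero:
  fixes X W U :: "'a :: comm_ring_1 mat"
  assumes X: "X \<in> carrier_mat n p" and W: "W \<in> carrier_mat n k" and U: "U \<in> carrier_mat p k"
    and orth: "transpose_mat U * U = 1\<^sub>m k" and XU: "X * U = W"
  shows "(X - W * transpose_mat U) * U = 0\<^sub>m n k"
proof -
  have "(X - W * transpose_mat U) * U = W - W * (transpose_mat U * U)"
    using X W U XU by (simp add: minus_mult_distrib_mat[of _ n p _ _ k])
  also have "\<dots> = 0\<^sub>m n k"
    using W orth by simp
  finally show ?thesis .
qed

theorem lemma3:
  fixes X :: "real mat" and Z :: "real vec" and n p k :: nat
    and Vk Dk Uk :: "real mat"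
  assumes "X \<in> carrier_mat n p"
    and "Z \<in> carrier_vec n" and "Z \<noteq> 0\<^sub>v n"
    and "1 \<le> k" and "k \<le> min n p"
    and "truncated_svd X k Vk Dk Uk"
  shows "(frob_norm (X - Vk * Dk * transpose_mat Uk))\<^sup>2
         \<le> (frob_norm (X - (1\<^sub>m n - proj_mat Z) * Vk * Dk * transpose_mat Uk))\<^sup>2
       \<and> (frob_norm (X - (1\<^sub>m n - proj_mat Z) * Vk * Dk * transpose_mat Uk))\<^sup>2
       = (frob_norm (X - Vk * Dk * transpose_mat Uk))\<^sup>2 + (frob_norm (proj_mat Z * Vk * Dk))\<^sup>2"
proof -
  note X = assms(1)
  note svd = truncated_svdD[OF assms(6) X assms(5)]
  define E where "E = X - Vk * Dk * transpose_mat Uk"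
  define P where "P = proj_mat Z"
  have P: "P \<in> carrier_mat n n"
    using assms(2) unfolding P_def proj_mat_def Let_def by auto
  have E: "E \<in> carrier_mat n p"
    using X svd by (simp add: E_def minus_carrier_mat)
  have "(1\<^sub>m n - P) * Vk * Dk * transpose_mat Uk
      = Vk * Dk * transpose_mat Uk - P * Vk * Dk * transpose_mat Uk"
    using P svd by (simp add: minus_mult_distrib_mat[of _ n n _ _ k]
        minus_mult_distrib_mat[of _ n k _ _ k] minus_mult_distrib_mat[of _ n k _ _ p])
  then have OG: "X - (1\<^sub>m n - P) * Vk * Dk * transpose_mat Uk
      = E + P * Vk * Dk * transpose_mat Uk"
    using X P svd by (auto simp: E_def intro!: eq_matI)
  have "(frob_norm (E + P * Vk * Dk * transpose_mat Uk))\<^sup>2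
      = (frob_norm E)\<^sup>2 + (frob_norm (P * Vk * Dk))\<^sup>2"
    using E P svd orthonormal_residual_mult_eq_zero[OF X _ _ _ svd(5)]
    by (intro frob_norm_sq_add_orthogonal) (auto simp: E_def)
  then show ?thesis
    unfolding OG E_def[symmetric] P_def[symmetric] by simp
qed

end
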